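(* Let $q$ be a prime power with $q-1=ds$, $d,s$ positive integers, let $r$ be an integer with $1\le r<s$, let $h(x)\in\mathbb{F}_q[x]$, let $\xi$ be a primitive element of $\mathbb{F}_q$ and $\omega=\xi^s$. If $f(x)=x^rh(x^s)$ is a permutation polynomial of $\mathbb{F}_q$, then its inverse over $\mathbb{F}_q$ is given by $$f^{-1}(x)=\frac1d\sum_{i=0}^{d-1}\sum_{j=0}^{d-1}\omega^{i(t-jr)}\left(\frac{x}{h(\omega^i)}\right)^{\tilde r+js},$$ where $\tilde r,t\in\mathbb{Z}$ satisfy $1\le\tilde r<s$ and $r\tilde r+st=1$.
   Context: A polynomial $f\in\mathbb{F}_q[x]$ is a permutation polynomial of $\mathbb{F}_q$ if it induces a bijection of $\mathbb{F}_q$. A polynomial $g$ is the inverse of $f$ over $\mathbb{F}_q$ if $g(f(c))=c$ for all $c\in\mathbb{F}_q$. Since $d\mid q-1$, $1/d$ makes sense in $\mathbb{F}_q$. *)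

theory Defs
  imports "HOL-Computational_Algebra.Polynomial" "HOL-Library.Cardinality"
begin

text \<open>Finite fields F_q are modelled by a type of class field and finite; q = CARD('a).\<close>

definition primitive_element :: "'a::{field,finite} \<Rightarrow> bool" where
  "primitive_element \<xi> \<longleftrightarrow> \<xi> \<noteq> 0 \<and> (\<forall>y. y \<noteq> 0 \<longrightarrow> (\<exists>k::nat. y = \<xi> ^ k))"

definition permutation_polynomial :: "'a::{field,finite} poly \<Rightarrow> bool" where
  "permutation_polynomial f \<longleftrightarrow> bij (poly f)"

definition is_inverse_poly :: "'a::{field,finite} poly \<Rightarrow> 'a poly \<Rightarrow> bool" where
  "is_inverse_poly g f \<longleftrightarrow> (\<forall>c. poly g (poly f c) = c)"

end

theory Submission
  imports Defs "HOL-Number_Theory.Cong"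
begin

text \<open>Write \<open>\<omega> = \<xi>^s\<close>, a primitive \<open>d\<close>-th root of unity, and \<open>f(c) = c^r h(c^s)\<close>. For \<open>c \<noteq> 0\<close> we
  have \<open>c^s = \<omega>^k\<close> for a unique \<open>k < d\<close>, and \<open>r r' + s t = 1\<close> turns the \<open>(i,j)\<close> summand of the
  candidate inverse at \<open>f(c)\<close> into \<open>c B\<^sub>i z\<^sub>i\<^sup>j\<close> with \<open>B\<^sub>k = 1\<close> and
  \<open>z\<^sub>i = (f(\<xi>^k) / f(\<xi>^i))^s\<close>. Each \<open>z\<^sub>i\<close> is a \<open>d\<close>-th root of unity, so the sum over \<open>j\<close>
  vanishes unless \<open>z\<^sub>i = 1\<close>; and \<open>z\<^sub>i = 1\<close> forces \<open>i = k\<close>, because \<open>gcd r s = 1\<close> and injectivity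
  of \<open>f\<close> imply that \<open>f(a)^s\<close> determines \<open>a^s\<close>. Only \<open>i = k\<close> survives and contributes \<open>d c\<close>.\<close>

lemma card_field_gt_1: "1 < CARD('a::{field,finite})"
proof -
  have "card {0, 1::'a} \<le> CARD('a)" by (rule card_mono) auto
  then show ?thesis by simp
qed

lemma finite_field_power_card_minus_one:
  fixes x :: "'a::{field,finite}"
  assumes "x \<noteq> 0"
  shows "x ^ (CARD('a) - 1) = 1"
proof -
  have "(\<Prod>y\<in>UNIV - {0}. x * y) = (\<Prod>y\<in>UNIV - {0::'a}. y)"
    by (rule prod.reindex_bij_witness[of _ "\<lambda>y. y / x" "\<lambda>y. x * y"]) (use assms in auto)
  moreover have "(\<Prod>y\<in>UNIV - {0}. x * y) = x ^ (CARD('a) - 1) * (\<Prod>y\<in>UNIV - {0::'a}. y)"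
    by (simp add: prod.distrib card_Diff_singleton)
  ultimately show ?thesis by simp
qed

lemma of_nat_card_eq_0: "(of_nat CARD('a::{field,finite}) :: 'a) = 0"
proof -
  have "(\<Sum>x\<in>UNIV. x + 1) = (\<Sum>x\<in>UNIV. x :: 'a)"
    by (rule sum.reindex_bij_witness[of _ "\<lambda>y. y - 1" "\<lambda>y. y + 1"]) auto
  then show ?thesis by (simp add: sum.distrib)
qed

lemma of_nat_dvd_card_minus_one_neq_0:
  assumes "d dvd CARD('a::{field,finite}) - 1"
  shows "(of_nat d :: 'a) \<noteq> 0"
proof
  assume d: "(of_nat d :: 'a) = 0"
  obtain k where "CARD('a) - 1 = d * k" using assms by (elim dvdE)
  then have "(of_nat (CARD('a) - 1) :: 'a) = 0" by (simp add: d)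
  moreover have "(of_nat (CARD('a) - 1) :: 'a) = of_nat CARD('a) - 1"
    using card_field_gt_1[where 'a='a] by (simp add: of_nat_diff)
  ultimately show False by (simp add: of_nat_card_eq_0)
qed

lemma power_mod_exponent:
  fixes x :: "'a::monoid_mult"
  assumes "x ^ n = 1"
  shows "x ^ k = x ^ (k mod n)"
proof -
  have "x ^ k = x ^ (n * (k div n) + k mod n)" by simp
  also have "\<dots> = (x ^ n) ^ (k div n) * x ^ (k mod n)" by (simp only: power_add power_mult)
  finally show ?thesis using assms by simp
qed

lemma sum_powers_root_of_unity:
  fixes z :: "'a::field"
  assumes "z ^ d = 1"
  shows "(\<Sum>j<d. z ^ j) = (if z = 1 then of_nat d else 0)"
proof (cases "z = 1")
  case False
  then show ?thesis using assms by (simp add: geometric_sum)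
qed simp

lemma cong_mult_eq_1_if_bezout:
  assumes "int r * int r' + int s * t = 1"
  shows "[r * r' = 1] (mod s)"
proof -
  have "[int (r * r') = int 1] (mod int s)"
    unfolding cong_iff_lin using assms by (intro exI[of _ t]) simp
  then show ?thesis by (simp only: cong_int_iff)
qed

lemma power_bezout_split:
  fixes c :: "'a::field"
  assumes "c \<noteq> 0" "int r * int r' + int s * t = 1"
  shows "(c ^ r) ^ (r' + j * s) = c * (c ^ s) powi (- t) * ((c ^ s) ^ r) ^ j"
proof -
  have "int (r * r') = 1 + int s * (- t)" using assms(2) by simp
  then have "c ^ (r * r') = c powi (1 + int s * (- t))"
    by (metis power_int_of_nat)
  also have "\<dots> = c powi 1 * (c powi int s) powi (- t)"
    using assms(1) by (simp only: power_int_add power_int_mult simp_thms)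
  also have "\<dots> = c * (c ^ s) powi (- t)" by simp
  finally show ?thesis
    by (simp add: power_add power_mult[symmetric] algebra_simps)
qed

lemma power_int_linear_exponent:
  fixes w :: "'a::field"
  assumes "w \<noteq> 0"
  shows "w powi (int i * (t - int j * int r)) = (w ^ i) powi t * inverse ((w ^ i) ^ r) ^ j"
proof -
  have "int i * (t - int j * int r) = int i * t - int (i * r * j)" by (simp add: algebra_simps)
  then show ?thesis
    using assms by (simp add: power_int_diff power_int_mult power_inverse power_mult divide_inverse)
qed

lemma primitive_element_inj_on_powers:
  fixes \<xi> :: "'a::{field,finite}"
  assumes "primitive_element \<xi>"
  shows "inj_on ((^) \<xi>) {..<CARD('a) - 1}"
proof -
  have \<xi>: "\<xi> \<noteq> 0" using assms by (simp add: primitive_element_def)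
  have "(^) \<xi> ` {..<CARD('a) - 1} = UNIV - {0}"
  proof
    show "(^) \<xi> ` {..<CARD('a) - 1} \<subseteq> UNIV - {0}" using \<xi> by auto
    show "UNIV - {0} \<subseteq> (^) \<xi> ` {..<CARD('a) - 1}"
    proof
      fix y :: 'a assume "y \<in> UNIV - {0}"
      then obtain k where "y = \<xi> ^ k" using assms by (auto simp: primitive_element_def)
      also have "\<dots> = \<xi> ^ (k mod (CARD('a) - 1))"
        by (rule power_mod_exponent[OF finite_field_power_card_minus_one[OF \<xi>]])
      finally show "y \<in> (^) \<xi> ` {..<CARD('a) - 1}"
        using card_field_gt_1[where 'a='a] by simp
    qed
  qed
  then have "card ((^) \<xi> ` {..<CARD('a) - 1}) = card {..<CARD('a) - 1}"
    by (simp add: card_Diff_singleton)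
  then show ?thesis by (simp add: eq_card_imp_inj_on)
qed

lemma primitive_element_power_inj_on:
  fixes \<xi> :: "'a::{field,finite}"
  assumes "primitive_element \<xi>" "CARD('a) - 1 = d * s"
  shows "inj_on (\<lambda>i. (\<xi> ^ s) ^ i) {..<d}"
proof (rule inj_onI)
  fix i k assume "i \<in> {..<d}" "k \<in> {..<d}" and eq: "(\<xi> ^ s) ^ i = (\<xi> ^ s) ^ k"
  moreover have "0 < s" using assms(2) card_field_gt_1[where 'a='a] by (cases s) auto
  ultimately have "s * i \<in> {..<CARD('a) - 1}" "s * k \<in> {..<CARD('a) - 1}"
    using assms(2) by (auto simp: mult.commute[of d])
  moreover have "\<xi> ^ (s * i) = \<xi> ^ (s * k)" using eq by (simp add: power_mult)
  ultimately have "s * i = s * k"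
    using primitive_element_inj_on_powers[OF assms(1)] by (auto dest: inj_onD)
  with \<open>0 < s\<close> show "i = k" by simp
qed

lemma primitive_element_power_order:
  fixes \<xi> :: "'a::{field,finite}"
  assumes "primitive_element \<xi>" "CARD('a) - 1 = d * s"
  shows "(\<xi> ^ s) ^ d = 1"
  using finite_field_power_card_minus_one[of \<xi>] assms
  by (simp add: primitive_element_def power_mult[symmetric] mult.commute)

lemma power_eq_primitive_element_power:
  fixes \<xi> c :: "'a::{field,finite}"
  assumes "primitive_element \<xi>" "CARD('a) - 1 = d * s" "0 < d" "c \<noteq> 0"
  obtains k where "k < d" "c ^ s = (\<xi> ^ s) ^ k"
proof -
  obtain m where "c = \<xi> ^ m" using assms(1,4) by (auto simp: primitive_element_def)
  then have "c ^ s = (\<xi> ^ s) ^ m" by (simp flip: power_mult add: mult.commute)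
  also have "\<dots> = (\<xi> ^ s) ^ (m mod d)"
    by (rule power_mod_exponent[OF primitive_element_power_order[OF assms(1,2)]])
  finally show ?thesis using that assms(3) by (metis mod_less_divisor)
qed

lemma twisted_monomial_nonzero:
  fixes g :: "'a::field \<Rightarrow> 'a"
  assumes "inj (\<lambda>c. c ^ r * g (c ^ s))" "0 < r" "c \<noteq> 0"
  shows "g (c ^ s) \<noteq> 0"
proof
  assume "g (c ^ s) = 0"
  then have "c ^ r * g (c ^ s) = 0 ^ r * g (0 ^ s)" using assms(2) by simp
  then show False using assms(1,3) by (auto dest: injD)
qed

text \<open>With \<open>\<zeta> = F b / F a\<close>, the \<open>s\<close>-th root of unity \<open>\<eta> = \<zeta>^{-r'}\<close> satisfies
  \<open>\<eta>^r = \<zeta>^{-1}\<close>, hence \<open>F (b \<eta>) = F a\<close> and \<open>a = b \<eta>\<close>.\<close>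
lemma twisted_monomial_power_eq:
  fixes g :: "'a::field \<Rightarrow> 'a" and r s r' :: nat and a b :: 'a
  defines "F \<equiv> \<lambda>c. c ^ r * g (c ^ s)"
  assumes inj: "inj F" and r': "[r * r' = 1] (mod s)" and eq: "F a ^ s = F b ^ s"
  shows "a ^ s = b ^ s"
proof (cases "s = 0 \<or> F a = F b")
  case True
  then show ?thesis using inj by (auto simp: inj_eq)
next
  case False
  then have Fa: "F a \<noteq> 0" and Fb: "F b \<noteq> 0"
    using eq by (auto simp: power_0_left split: if_splits)
  define \<zeta> where "\<zeta> = F b / F a"
  define \<eta> where "\<eta> = inverse \<zeta> ^ r'"
  have \<zeta>: "\<zeta> ^ s = 1" using eq Fa Fb by (simp add: \<zeta>_def power_divide)
  have "\<eta> ^ s = inverse ((\<zeta> ^ s) ^ r')"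
    unfolding \<eta>_def power_inverse power_mult[symmetric] by (simp only: mult.commute)
  then have \<eta>: "\<eta> ^ s = 1" using \<zeta> by simp
  have "\<zeta> ^ (r * r') = \<zeta>"
    using power_mod_exponent[OF \<zeta>, of "r * r'"] power_mod_exponent[OF \<zeta>, of 1] r'
    by (simp add: cong_def)
  then have "\<eta> ^ r = inverse \<zeta>" by (simp add: \<eta>_def power_inverse mult.commute flip: power_mult)
  then have "F (b * \<eta>) = F a"
    using Fa Fb by (simp add: F_def power_mult_distrib \<eta> \<zeta>_def)
  then have "a = b * \<eta>" using inj by (simp add: inj_eq)
  then show ?thesis by (simp add: power_mult_distrib \<eta>)
qed

lemma twisted_monomial_inverse_sum:
  fixes \<xi> c :: "'a::{field,finite}" and g :: "'a \<Rightarrow> 'a" and d s r r' :: nat and t :: int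
  defines "F \<equiv> \<lambda>c. c ^ r * g (c ^ s)"
  assumes inj: "inj F" and r: "0 < r" and bezout: "int r * int r' + int s * t = 1"
    and \<xi>: "primitive_element \<xi>" and q: "CARD('a) - 1 = d * s" and d: "0 < d"
    and c: "c \<noteq> 0"
  shows "(\<Sum>i<d. \<Sum>j<d. (\<xi> ^ s) powi (int i * (t - int j * int r))
            * inverse (g ((\<xi> ^ s) ^ i)) ^ (r' + j * s) * F c ^ (r' + j * s)) = of_nat d * c"
proof -
  define \<omega> where "\<omega> = \<xi> ^ s"
  define H where "H i = g (\<omega> ^ i)" for i
  have \<xi>0: "\<xi> \<noteq> 0" using \<xi> by (simp add: primitive_element_def)
  then have \<omega>0: "\<omega> \<noteq> 0" by (simp add: \<omega>_def)
  have \<omega>_pow: "\<omega> ^ i = (\<xi> ^ i) ^ s" for i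
    by (simp add: \<omega>_def mult.commute flip: power_mult)
  have H0: "H i \<noteq> 0" for i
    using twisted_monomial_nonzero[OF inj[unfolded F_def] r, of "\<xi> ^ i"] \<xi>0 by (simp add: H_def \<omega>_pow)
  have F_pow: "F (\<xi> ^ i) ^ s = (\<omega> ^ i) ^ r * H i ^ s" for i
    by (simp add: F_def H_def \<omega>_pow power_mult_distrib mult_ac flip: power_mult)
  have F0: "F (\<xi> ^ i) \<noteq> 0" for i
    using H0[of i] \<xi>0 by (simp add: F_def H_def \<omega>_pow)
  obtain k where k: "k < d" "c ^ s = \<omega> ^ k"
    using power_eq_primitive_element_power[OF \<xi> q d c] unfolding \<omega>_def by blast
  define z where "z i = (F (\<xi> ^ k) / F (\<xi> ^ i)) ^ s" for i
  have summand: "\<omega> powi (int i * (t - int j * int r)) * inverse (H i) ^ (r' + j * s) * F c ^ (r' + j * s)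
      = c * ((\<omega> ^ i) powi t * (\<omega> ^ k) powi (- t) * (H k / H i) ^ r') * z i ^ j" for i j
  proof -
    have "F c ^ (r' + j * s) = (c ^ r) ^ (r' + j * s) * H k ^ (r' + j * s)"
      by (simp add: F_def H_def k(2) power_mult_distrib)
    also have "\<dots> = c * (\<omega> ^ k) powi (- t) * ((\<omega> ^ k) ^ r) ^ j * (H k ^ r' * (H k ^ s) ^ j)"
      using power_bezout_split[OF c bezout, of j] k(2)
      by (simp add: power_add power_mult[symmetric] mult.commute)
    finally have Fc: "F c ^ (r' + j * s)
        = c * (\<omega> ^ k) powi (- t) * ((\<omega> ^ k) ^ r) ^ j * (H k ^ r' * (H k ^ s) ^ j)" .
    have Hi: "inverse (H i) ^ (r' + j * s) = inverse (H i) ^ r' * inverse (H i ^ s) ^ j"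
      by (simp add: power_add power_inverse power_mult[symmetric] mult.commute)
    have z: "z i = (\<omega> ^ k) ^ r * H k ^ s / ((\<omega> ^ i) ^ r * H i ^ s)"
      by (simp add: z_def power_divide F_pow)
    have regroup: "A * inverse P ^ j * (inverse X ^ r' * inverse Y ^ j) * (c * B * K ^ j * (Hk ^ r' * S ^ j))
      = c * (A * B * (Hk / X) ^ r') * (K * S / (P * Y)) ^ j" for A B P X Y K S Hk :: 'a
      by (simp add: divide_inverse power_mult_distrib mult_ac)
    show ?thesis
      unfolding Fc Hi z power_int_linear_exponent[OF \<omega>0] by (rule regroup)
  qed
  have z_root: "z i ^ d = 1" for i
    using finite_field_power_card_minus_one[of "F (\<xi> ^ k) / F (\<xi> ^ i)"] F0 q
    by (simp add: z_def mult.commute flip: power_mult)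
  have z_eq_1: "z i = 1 \<longleftrightarrow> i = k" if "i < d" for i
  proof
    assume "z i = 1"
    then have "F (\<xi> ^ k) ^ s = F (\<xi> ^ i) ^ s" using F0 by (simp add: z_def power_divide)
    then have "\<omega> ^ k = \<omega> ^ i"
      using twisted_monomial_power_eq[OF inj[unfolded F_def] cong_mult_eq_1_if_bezout[OF bezout],
          of "\<xi> ^ k" "\<xi> ^ i"]
      by (simp add: F_def \<omega>_pow)
    then show "i = k"
      using primitive_element_power_inj_on[OF \<xi> q] that k(1) by (auto simp: \<omega>_def dest: inj_onD)
  qed (simp add: z_def F0)
  have inner: "(\<Sum>j<d. \<omega> powi (int i * (t - int j * int r)) * inverse (H i) ^ (r' + j * s)
      * F c ^ (r' + j * s)) = (if i = k then of_nat d * c else 0)" if "i < d" for i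
  proof -
    have "(\<Sum>j<d. \<omega> powi (int i * (t - int j * int r)) * inverse (H i) ^ (r' + j * s) * F c ^ (r' + j * s))
        = c * ((\<omega> ^ i) powi t * (\<omega> ^ k) powi (- t) * (H k / H i) ^ r') * (\<Sum>j<d. z i ^ j)"
      by (simp add: summand sum_distrib_left)
    also have "\<dots> = (if i = k then of_nat d * c else 0)"
      using sum_powers_root_of_unity[OF z_root, of i] z_eq_1[OF that] \<omega>0 H0[of k]
      by (auto simp: power_int_minus)
    finally show ?thesis .
  qed
  have "(\<Sum>i<d. \<Sum>j<d. \<omega> powi (int i * (t - int j * int r)) * inverse (H i) ^ (r' + j * s)
      * F c ^ (r' + j * s)) = (\<Sum>i<d. if i = k then of_nat d * c else 0)"
    by (rule sum.cong) (simp_all add: inner)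
  then show ?thesis using k(1) by (simp add: \<omega>_def H_def)
qed

lemma twisted_monomial_inverse_eval:
  fixes \<xi> c :: "'a::{field,finite}" and g :: "'a \<Rightarrow> 'a" and d s r r' :: nat and t :: int
  defines "F \<equiv> \<lambda>c. c ^ r * g (c ^ s)"
  assumes "inj F" "0 < r" "0 < r'" "int r * int r' + int s * t = 1"
    and "primitive_element \<xi>" "CARD('a) - 1 = d * s" "0 < d"
  shows "inverse (of_nat d) * (\<Sum>i<d. \<Sum>j<d. (\<xi> ^ s) powi (int i * (t - int j * int r))
            * inverse (g ((\<xi> ^ s) ^ i)) ^ (r' + j * s) * F c ^ (r' + j * s)) = c"
proof (cases "c = 0")
  case True
  then show ?thesis using assms(3,4) by (simp add: F_def power_0_left)
next
  case False
  have "(of_nat d :: 'a) \<noteq> 0" using assms(7) by (intro of_nat_dvd_card_minus_one_neq_0) simp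
  then show ?thesis using twisted_monomial_inverse_sum[OF assms(2)[unfolded F_def] assms(3,5-8) False]
    by (simp add: F_def)
qed

theorem corollary4p5:
  fixes h :: "'a::{field,finite} poly"
    and d s r r' :: nat and t :: int and \<xi> :: 'a
  assumes "d > 0" "s > 0" "CARD('a) - 1 = d * s"
    and "1 \<le> r" "r < s"
    and "primitive_element \<xi>"
    and "permutation_polynomial (monom 1 r * pcompose h (monom 1 s))"
    and "1 \<le> r'" "r' < s" "int r * int r' + int s * t = 1"
  shows "is_inverse_poly
     (smult (inverse (of_nat d))
        (\<Sum>i<d. \<Sum>j<d.
           smult ((\<xi> ^ s) powi (int i * (t - int j * int r)) * inverse (poly h ((\<xi> ^ s) ^ i)) ^ (r' + j * s))
                 (monom 1 (r' + j * s))))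
     (monom 1 r * pcompose h (monom 1 s))"
proof -
  have poly_f: "poly (monom 1 r * pcompose h (monom 1 s)) = (\<lambda>c. c ^ r * poly h (c ^ s))"
    by (rule ext) (simp add: poly_monom poly_pcompose)
  then have "inj (\<lambda>c. c ^ r * poly h (c ^ s))"
    using assms(7) by (simp add: permutation_polynomial_def bij_is_inj)
  from twisted_monomial_inverse_eval[OF this _ _ assms(10,6,3,1)] assms(4,8)
  show ?thesis
    by (simp add: is_inverse_poly_def poly_f poly_sum poly_monom)
qed

end
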